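(* Let $H=(W,F)$ be a graph, $xy$ a flat edge of $H$, and $B=(X,Y;E_{XY})$ a cobipartite graph disjoint from $H$ with $E_{XY}\neq\varnothing$. Let $G$ be the graph obtained by the augmentation of the edge $xy$ in $H$ using $B$, and let $D=(V,A)$ be a clique-acyclic orientation of $G$. Let $s_X,s_Y$ be the sinks of $D[X]$ and $D[Y]$ respectively, labelled so that $(s_X,s_Y)\notin A$. Let $U=Y\setminus N_G(s_X)$, let $S_U=\varnothing$ if $U=\varnothing$ and $S_U=\{s_U\}$ where $s_U$ is the sink of $D[U]$ otherwise, and let $Z=(V\setminus(X\cup Y))\cup\{s_X,s_Y\}\cup S_U$. Then $G[Z]$ is isomorphic to $H$, or to $H$ with the edge $xy$ deleted, or to $H$ plus an additional vertex whose neighborhood is $(N_H(y)\cup\{y\})\setminus\{x\}$.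
   Context: An edge of an undirected graph is flat if it is contained in no triangle. A cobipartite graph $B=(X,Y;E_{XY})$ has vertex set partitioned into two cliques $X$ and $Y$, with $E_{XY}$ the set of edges between $X$ and $Y$. The augmentation of a flat edge $xy$ in $H$ using $B$ builds a graph from $H$ and $B$ by removing $x$, $y$ (and the edge $xy$) from $H$, and adding all edges between $X$ and $N_H(x)\setminus\{y\}$ and all edges between $Y$ and $N_H(y)\setminus\{x\}$. $N_G(v)$ is the neighborhood of $v$ in $G$. An orientation orients each edge in exactly one direction; it is clique-acyclic if every clique has a sink, i.e. a vertex receiving an arc from every other vertex of the clique. The condition $(s_X,s_Y)\notin A$ means that if $s_X,s_Y$ are adjacent then the arc is $(s_Y,s_X)$. *)

theory Defs
  imports Main
begin

definition graph :: "'a set \<Rightarrow> 'a set set \<Rightarrow> bool" where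
  "graph V E \<longleftrightarrow> finite V \<and> (\<forall>e\<in>E. e \<subseteq> V \<and> card e = 2)"

definition nbhd :: "'a set \<Rightarrow> 'a set set \<Rightarrow> 'a \<Rightarrow> 'a set" where
  "nbhd V E v = {u\<in>V. u \<noteq> v \<and> {u, v} \<in> E}"

definition flat_edge :: "'a set \<Rightarrow> 'a set set \<Rightarrow> 'a \<Rightarrow> 'a \<Rightarrow> bool" where
  "flat_edge V E x y \<longleftrightarrow> x \<noteq> y \<and> {x, y} \<in> E \<and>
     \<not> (\<exists>w\<in>V. w \<noteq> x \<and> w \<noteq> y \<and> {x, w} \<in> E \<and> {y, w} \<in> E)"

definition clique_edges :: "'a set \<Rightarrow> 'a set set" where
  "clique_edges X = {{a, b} | a b. a \<in> X \<and> b \<in> X \<and> a \<noteq> b}"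

text \<open>Cobipartite graph B = (X, Y; E_XY): two disjoint cliques X, Y and edges E_XY between them.
  Its edge set is clique_edges X \<union> clique_edges Y \<union> E_XY.\<close>
definition cobipartite :: "'a set \<Rightarrow> 'a set \<Rightarrow> 'a set set \<Rightarrow> bool" where
  "cobipartite X Y EXY \<longleftrightarrow> finite X \<and> finite Y \<and> X \<inter> Y = {} \<and>
     EXY \<subseteq> {{a, b} | a b. a \<in> X \<and> b \<in> Y}"

definition aug_vertices :: "'a set \<Rightarrow> 'a \<Rightarrow> 'a \<Rightarrow> 'a set \<Rightarrow> 'a set \<Rightarrow> 'a set" where
  "aug_vertices V x y X Y = (V - {x, y}) \<union> X \<union> Y"

definition aug_edges :: "'a set \<Rightarrow> 'a set set \<Rightarrow> 'a \<Rightarrow> 'a \<Rightarrow> 'a set \<Rightarrow> 'a set \<Rightarrow> 'a set set \<Rightarrow> 'a set set" where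
  "aug_edges V E x y X Y EXY =
     {e \<in> E. x \<notin> e \<and> y \<notin> e} \<union> clique_edges X \<union> clique_edges Y \<union> EXY
     \<union> {{a, w} | a w. a \<in> X \<and> w \<in> nbhd V E x - {y}}
     \<union> {{b, w} | b w. b \<in> Y \<and> w \<in> nbhd V E y - {x}}"

definition orientation :: "'a set \<Rightarrow> 'a set set \<Rightarrow> ('a \<times> 'a) set \<Rightarrow> bool" where
  "orientation V E A \<longleftrightarrow>
     (\<forall>u v. (u, v) \<in> A \<longrightarrow> u \<in> V \<and> v \<in> V \<and> u \<noteq> v \<and> {u, v} \<in> E) \<and>
     (\<forall>u\<in>V. \<forall>v\<in>V. u \<noteq> v \<longrightarrow> {u, v} \<in> E \<longrightarrow> ((u, v) \<in> A \<longleftrightarrow> (v, u) \<notin> A))"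

definition is_clique :: "'a set \<Rightarrow> 'a set set \<Rightarrow> 'a set \<Rightarrow> bool" where
  "is_clique V E K \<longleftrightarrow> K \<subseteq> V \<and> (\<forall>u\<in>K. \<forall>v\<in>K. u \<noteq> v \<longrightarrow> {u, v} \<in> E)"

definition is_sink :: "('a \<times> 'a) set \<Rightarrow> 'a set \<Rightarrow> 'a \<Rightarrow> bool" where
  "is_sink A K v \<longleftrightarrow> v \<in> K \<and> (\<forall>u\<in>K. u \<noteq> v \<longrightarrow> (u, v) \<in> A)"

definition clique_acyclic :: "'a set \<Rightarrow> 'a set set \<Rightarrow> ('a \<times> 'a) set \<Rightarrow> bool" where
  "clique_acyclic V E A \<longleftrightarrow> orientation V E A \<and>
     (\<forall>K. is_clique V E K \<and> K \<noteq> {} \<longrightarrow> (\<exists>v. is_sink A K v))"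

definition induced_edges :: "'a set set \<Rightarrow> 'a set \<Rightarrow> 'a set set" where
  "induced_edges E Z = {e \<in> E. e \<subseteq> Z}"

definition graph_iso :: "'a set \<Rightarrow> 'a set set \<Rightarrow> 'b set \<Rightarrow> 'b set set \<Rightarrow> bool" where
  "graph_iso V1 E1 V2 E2 \<longleftrightarrow> (\<exists>f. bij_betw f V1 V2 \<and>
     (\<forall>u\<in>V1. \<forall>v\<in>V1. {u, v} \<in> E1 \<longleftrightarrow> {f u, f v} \<in> E2))"

definition add_vertex_vertices :: "'a set \<Rightarrow> 'a option set" where
  "add_vertex_vertices V = Some ` V \<union> {None}"

definition add_vertex_edges :: "'a set \<Rightarrow> 'a set set \<Rightarrow> 'a \<Rightarrow> 'a \<Rightarrow> 'a option set set" where
  "add_vertex_edges V E x y = (image Some) ` E \<union>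
     {{None, Some w} | w. w \<in> (nbhd V E y \<union> {y}) - {x}}"

end

theory Submission
  imports Defs
begin

text \<open>Every vertex of X sees exactly the H-neighbours of x outside \<open>{x, y}\<close>, and every vertex
  of Y those of y. Hence in \<open>G[(W - {x, y}) \<union> {sX, sY}]\<close> the vertex sX plays x and sY plays y,
  and only the pair sX sY is in doubt: it gives H or H minus the edge xy. If U is nonempty and
  sX sY is an edge, then the sink sU of U is a vertex of Y other than sY that misses sX, so it
  plays the new vertex adjacent to \<open>(N(y) \<union> {y}) - {x}\<close>. If sX sY is not an edge, then sY lies
  in U, and being the sink of all of Y it is the sink of U, so sU adds nothing.
  Flatness is used only for \<open>xy \<in> F\<close>.\<close>

lemma graph_isoI:
  assumes "bij_betw f V1 V2"
    and "\<And>u. {u} \<notin> E1" and "\<And>u. {u} \<notin> E2"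
    and "\<And>u v. u \<in> V1 \<Longrightarrow> v \<in> V1 \<Longrightarrow> u \<noteq> v \<Longrightarrow> {u, v} \<in> E1 \<longleftrightarrow> {f u, f v} \<in> E2"
  shows "graph_iso V1 E1 V2 E2"
  unfolding graph_iso_def
proof (intro exI conjI ballI)
  fix u v assume "u \<in> V1" "v \<in> V1"
  then show "{u, v} \<in> E1 \<longleftrightarrow> {f u, f v} \<in> E2"
    using assms by (cases "u = v") auto
qed (rule assms(1))

lemma induced_edges_pair_iff:
  "u \<in> Z \<Longrightarrow> v \<in> Z \<Longrightarrow> {u, v} \<in> induced_edges E Z \<longleftrightarrow> {u, v} \<in> E"
  unfolding induced_edges_def by auto

lemma graph_singleton_not_edge: "graph V E \<Longrightarrow> {u} \<notin> E"
  unfolding graph_def by fastforce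

lemma sink_unique:
  assumes "orientation V E A" "is_sink A K s" "is_sink A K t"
  shows "s = t"
  using assms unfolding orientation_def is_sink_def by metis

lemma the_sink:
  assumes "orientation V E A" "is_sink A K s"
  shows "(THE s. is_sink A K s) = s"
  using assms by (blast intro: the_equality sink_unique)

lemma sink_of_subclique_cases:
  assumes "clique_acyclic V E A" "is_sink A Y sY" "U \<subseteq> Y" "is_clique V E U"
  obtains "U = {}" | sU where "is_sink A U sU" "sU \<noteq> sY" "sY \<notin> U" | "is_sink A U sY"
proof (cases "U = {}")
  case False
  then obtain sU where sU: "is_sink A U sU"
    using assms(1,4) unfolding clique_acyclic_def by blast
  show thesis
  proof (cases "sY \<in> U")
    case True
    then have "is_sink A U sY" using assms(2,3) unfolding is_sink_def by blast
    then show thesis using that(3) by blast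
  next
    case False
    then show thesis using that(2) sU unfolding is_sink_def by blast
  qed
qed

lemma add_vertex_edges_Some_iff:
  "{Some u, Some v} \<in> add_vertex_edges W F x y \<longleftrightarrow> {u, v} \<in> F"
proof -
  have "Some ` e = Some ` {u, v} \<longleftrightarrow> e = {u, v}" for e
    by (metis inj_Some inj_image_eq_iff)
  moreover have "Some ` {u, v} \<notin> {{None, Some w} | w. w \<in> (nbhd W F y \<union> {y}) - {x}}"
    by auto
  ultimately show ?thesis
    unfolding add_vertex_edges_def by (metis (no_types, lifting) UnCI UnE image_iff image_insert
        image_empty)
qed

lemma add_vertex_edges_None_iff:
  "{None, Some v} \<in> add_vertex_edges W F x y \<longleftrightarrow> v \<in> (nbhd W F y \<union> {y}) - {x}"
  "{Some v, None} \<in> add_vertex_edges W F x y \<longleftrightarrow> v \<in> (nbhd W F y \<union> {y}) - {x}"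
  unfolding add_vertex_edges_def by (auto simp: doubleton_eq_iff)

lemma add_vertex_edges_singleton:
  assumes "graph W F"
  shows "{z} \<notin> add_vertex_edges W F x y"
proof (cases z)
  case (Some w)
  then show ?thesis
    using add_vertex_edges_Some_iff[of w w] graph_singleton_not_edge[OF assms] by simp
qed (auto simp: add_vertex_edges_def)

locale augmentation =
  fixes W :: "'a set" and F :: "'a set set" and x y :: 'a and X Y :: "'a set" and EXY
  assumes graph: "graph W F" and cobip: "cobipartite X Y EXY" and disj: "(X \<union> Y) \<inter> W = {}"
begin

abbreviation E where "E \<equiv> aug_edges W F x y X Y EXY"

lemma EXY_elem_in_XY: "{u, v} \<in> EXY \<Longrightarrow> u \<in> X \<union> Y \<and> v \<in> X \<union> Y"
  using cobip unfolding cobipartite_def by (auto simp: doubleton_eq_iff)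

lemma F_elem_in_W: "{u, v} \<in> F \<Longrightarrow> u \<in> W \<and> v \<in> W"
  using graph unfolding graph_def by auto

lemmas setting = graph cobip disj

lemma aug_edge_outside_iff:
  "u \<in> W - {x, y} \<Longrightarrow> v \<in> W - {x, y} \<Longrightarrow> {u, v} \<in> E \<longleftrightarrow> {u, v} \<in> F"
  using setting unfolding aug_edges_def clique_edges_def cobipartite_def graph_def
  by (auto simp: doubleton_eq_iff dest: EXY_elem_in_XY)

lemma aug_edge_X_iff:
  assumes "a \<in> X" "v \<in> W - {x, y}"
  shows "{a, v} \<in> E \<longleftrightarrow> {x, v} \<in> F" "{v, a} \<in> E \<longleftrightarrow> {v, x} \<in> F"
proof -
  show "{a, v} \<in> E \<longleftrightarrow> {x, v} \<in> F"
    using assms setting unfolding aug_edges_def clique_edges_def cobipartite_def graph_def nbhd_def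
    by (auto simp: doubleton_eq_iff insert_commute dest: EXY_elem_in_XY F_elem_in_W)
  then show "{v, a} \<in> E \<longleftrightarrow> {v, x} \<in> F" by (simp add: insert_commute)
qed

lemma aug_edge_Y_iff:
  assumes "b \<in> Y" "v \<in> W - {x, y}"
  shows "{b, v} \<in> E \<longleftrightarrow> {y, v} \<in> F" "{v, b} \<in> E \<longleftrightarrow> {v, y} \<in> F"
proof -
  show "{b, v} \<in> E \<longleftrightarrow> {y, v} \<in> F"
    using assms setting unfolding aug_edges_def clique_edges_def cobipartite_def graph_def nbhd_def
    by (auto simp: doubleton_eq_iff insert_commute dest: EXY_elem_in_XY F_elem_in_W)
  then show "{v, b} \<in> E \<longleftrightarrow> {v, y} \<in> F" by (simp add: insert_commute)
qed

lemma aug_edge_Y_clique: "a \<in> Y \<Longrightarrow> b \<in> Y \<Longrightarrow> a \<noteq> b \<Longrightarrow> {a, b} \<in> E"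
  unfolding aug_edges_def clique_edges_def by blast

lemma aug_singleton_not_edge: "{u} \<notin> E"
  using setting unfolding aug_edges_def clique_edges_def cobipartite_def graph_def nbhd_def
  by (auto simp: doubleton_eq_iff) blast+

lemma graph_iso_contract:
  assumes sX: "sX \<in> X" and sY: "sY \<in> Y" and xy: "x \<in> W" "y \<in> W" "x \<noteq> y" "{x, y} \<in> F"
  defines "Z \<equiv> W - {x, y} \<union> {sX, sY}"
  shows "graph_iso Z (induced_edges E Z) W (if {sX, sY} \<in> E then F else F - {{x, y}})"
proof -
  define f where "f v = (if v = sX then x else if v = sY then y else v)" for v
  have new: "sX \<notin> W" "sY \<notin> W" "sX \<noteq> sY"
    using sX sY setting unfolding cobipartite_def by auto
  show ?thesis
  proof (rule graph_isoI)
    show "bij_betw f Z W"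
      unfolding bij_betw_def inj_on_def f_def Z_def using new xy by auto
    show "{u} \<notin> induced_edges E Z" for u
      using aug_singleton_not_edge by (simp add: induced_edges_def)
    show "{u} \<notin> (if {sX, sY} \<in> E then F else F - {{x, y}})" for u
      using graph_singleton_not_edge[OF graph] by simp
    fix u v assume "u \<in> Z" "v \<in> Z" "u \<noteq> v"
    then show "{u, v} \<in> induced_edges E Z \<longleftrightarrow>
        {f u, f v} \<in> (if {sX, sY} \<in> E then F else F - {{x, y}})"
      using new xy sX sY unfolding Z_def
      by (auto simp: induced_edges_pair_iff f_def aug_edge_outside_iff aug_edge_X_iff
          aug_edge_Y_iff insert_commute doubleton_eq_iff)
  qed
qed

lemma graph_iso_contract_add_vertex:
  assumes sX: "sX \<in> X" and sY: "sY \<in> Y" and sU: "sU \<in> Y" "sU \<noteq> sY"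
    and xy: "x \<in> W" "y \<in> W" "x \<noteq> y" "{x, y} \<in> F"
    and "{sX, sY} \<in> E" "{sX, sU} \<notin> E"
  defines "Z \<equiv> W - {x, y} \<union> {sX, sY} \<union> {sU}"
  shows "graph_iso Z (induced_edges E Z) (add_vertex_vertices W) (add_vertex_edges W F x y)"
proof -
  define f where
    "f v = (if v = sX then Some x else if v = sY then Some y else if v = sU then None else Some v)"
    for v
  have new: "sX \<notin> W" "sY \<notin> W" "sU \<notin> W" "sX \<noteq> sY" "sU \<noteq> sX" "sU \<noteq> sY"
    using sX sY sU setting unfolding cobipartite_def by auto
  have edges: "{sY, sX} \<in> E" "{sU, sX} \<notin> E" "{sU, sY} \<in> E" "{sY, sU} \<in> E" "{y, x} \<in> F"
    using assms aug_edge_Y_clique by (auto simp: insert_commute)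
  have nbhd_y: "v \<in> W - {x, y} \<Longrightarrow> v \<in> nbhd W F y \<longleftrightarrow> {y, v} \<in> F" for v
    unfolding nbhd_def by (auto simp: insert_commute)
  have y_sym: "{y, v} \<in> F \<longleftrightarrow> {v, y} \<in> F" for v
    by (simp add: insert_commute)
  show ?thesis
  proof (rule graph_isoI)
    show "bij_betw f Z (add_vertex_vertices W)"
      unfolding bij_betw_def inj_on_def f_def Z_def add_vertex_vertices_def
      using new xy by (auto simp: image_iff)
    show "{u} \<notin> induced_edges E Z" for u
      using aug_singleton_not_edge by (simp add: induced_edges_def)
    show "{u} \<notin> add_vertex_edges W F x y" for u
      using add_vertex_edges_singleton[OF graph] .
    fix u v assume "u \<in> Z" "v \<in> Z" "u \<noteq> v"
    then show "{u, v} \<in> induced_edges E Z \<longleftrightarrow> {f u, f v} \<in> add_vertex_edges W F x y"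
      using assms new edges nbhd_y y_sym unfolding Z_def
      by (auto simp: induced_edges_pair_iff f_def aug_edge_outside_iff aug_edge_X_iff
          aug_edge_Y_iff add_vertex_edges_Some_iff add_vertex_edges_None_iff)
  qed
qed

end

theorem lemma2:
  fixes W :: "'a set" and F :: "'a set set" and x y :: 'a
    and X Y :: "'a set" and EXY :: "'a set set" and A :: "('a \<times> 'a) set"
    and sX sY :: 'a
  assumes "graph W F"
    and "flat_edge W F x y"
    and "cobipartite X Y EXY"
    and "(X \<union> Y) \<inter> W = {}"
    and "EXY \<noteq> {}"
    and "clique_acyclic (aug_vertices W x y X Y) (aug_edges W F x y X Y EXY) A"
    and "is_sink A X sX" and "is_sink A Y sY"
    and "(sX, sY) \<notin> A"
  shows
    "let V = aug_vertices W x y X Y; E = aug_edges W F x y X Y EXY;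
         U = Y - nbhd V E sX;
         SU = (if U = {} then {} else {THE s. is_sink A U s});
         Z = (V - (X \<union> Y)) \<union> {sX, sY} \<union> SU
     in graph_iso Z (induced_edges E Z) W F
      \<or> graph_iso Z (induced_edges E Z) W (F - {{x, y}})
      \<or> graph_iso Z (induced_edges E Z) (add_vertex_vertices W) (add_vertex_edges W F x y)"
proof -
  interpret augmentation W F x y X Y EXY
    using assms(1,3,4) by unfold_locales
  define V where "V = aug_vertices W x y X Y"
  define U where "U = Y - nbhd V E sX"
  have xy: "x \<in> W" "y \<in> W" "x \<noteq> y" "{x, y} \<in> F"
    using assms(1,2) unfolding flat_edge_def graph_def by auto
  have orient: "orientation V E A"
    using assms(6) unfolding clique_acyclic_def V_def by auto
  have sX: "sX \<in> X" and sY: "sY \<in> Y"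
    using assms(7,8) unfolding is_sink_def by auto
  have outside: "V - (X \<union> Y) = W - {x, y}" and "Y \<subseteq> V"
    using assms(4) unfolding V_def aug_vertices_def by auto
  then have U_iff: "u \<in> U \<longleftrightarrow> u \<in> Y \<and> {sX, u} \<notin> E" for u
    using sX assms(3) unfolding U_def nbhd_def cobipartite_def by (auto simp: insert_commute)
  have U_clique: "is_clique V E U"
    using \<open>Y \<subseteq> V\<close> U_iff aug_edge_Y_clique unfolding is_clique_def by blast
  define SU where "SU = (if U = {} then {} else {THE s. is_sink A U s})"
  define Z where "Z = W - {x, y} \<union> {sX, sY} \<union> SU"
  have "graph_iso Z (induced_edges E Z) W F
      \<or> graph_iso Z (induced_edges E Z) W (F - {{x, y}})
      \<or> graph_iso Z (induced_edges E Z) (add_vertex_vertices W) (add_vertex_edges W F x y)"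
  proof (rule sink_of_subclique_cases[OF assms(6,8) _ U_clique[unfolded V_def]])
    show "U \<subseteq> Y" unfolding U_def by (rule Diff_subset)
  next
    assume "U = {}"
    then have "{sX, sY} \<in> E" using U_iff sY by blast
    then show ?thesis
      using graph_iso_contract[OF sX sY xy] \<open>U = {}\<close> by (simp add: Z_def SU_def)
  next
    fix sU assume sU: "is_sink A U sU" "sU \<noteq> sY" "sY \<notin> U"
    then have "sU \<in> Y" "{sX, sU} \<notin> E" "{sX, sY} \<in> E" "U \<noteq> {}"
      using U_iff sY unfolding is_sink_def by auto
    then show ?thesis
      using graph_iso_contract_add_vertex[OF sX sY _ sU(2) xy] the_sink[OF orient sU(1)]
      by (simp add: Z_def SU_def)
  next
    assume sink: "is_sink A U sY"
    then have "{sX, sY} \<notin> E" "U \<noteq> {}" using U_iff unfolding is_sink_def by auto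
    moreover have "W - {x, y} \<union> {sX, sY} \<union> {sY} = W - {x, y} \<union> {sX, sY}" by blast
    ultimately show ?thesis
      using graph_iso_contract[OF sX sY xy] the_sink[OF orient sink]
      by (simp only: Z_def SU_def if_False) simp
  qed
  then show ?thesis
    unfolding Let_def
    by (simp only: V_def[symmetric] U_def[symmetric] outside SU_def[symmetric] Z_def[symmetric])
qed

end
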